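(* Let $A$ be a locally-complex Cayley--Dickson algebra and let $f(x)=x^n+a_{n-1}x^{n-1}+\dots+a_0\in A[x]$ be monic with $n\ge1$. Then every root $r\in A$ of $f(x)$ and every root $r\in A$ of $f'(x)$ satisfies $|r|<R_1(f)$, $|r|<R_2(f)$ and $|r|\le R_3(f)$, where $R_1(f)=\sqrt{1+\sum_{k=0}^{n-1}|a_k|^2}$, $R_2(f)=1+\max_{0\le k\le n-1}|a_k|$, $R_3(f)=\max\{1,\sum_{k=0}^{n-1}|a_k|\}$. In terms of the spectral radius: $\rho(f),\rho(f')<R_1(f)$, $\rho(f),\rho(f')<R_2(f)$, $\rho(f),\rho(f')\le R_3(f)$.
   Context: Real Cayley--Dickson algebras: $A_0=\mathbb{R}$ with identity involution, $A_{k+1}=A_k\{\gamma_k\}=A_k\times A_k$ with product $(a,b)(c,d)=(ac+\gamma_k\bar d b,\ da+b\bar c)$ and involution $\overline{(a,b)}=(\bar a,-b)$. A real unital algebra is locally-complex if every non-real element generates a subalgebra isomorphic to $\mathbb{C}$ (for Cayley--Dickson algebras: all $\gamma_k=-1$ up to isomorphism). Norm $\mathrm{n}(\lambda)=\bar\lambda\lambda$, $|\lambda|=\sqrt{\mathrm{n}(\lambda)}$ (Euclidean norm). $A[x]=A\otimes_{\mathbb{R}}\mathbb{R}[x]$ with central $x$; substitution $f(r)=\sum_k a_k(r^k)$; formal derivative $f'(x)=\sum_k ka_kx^{k-1}$. The spectral radius of $g\in A[x]$ is $\rho(g)=\sup\{|\lambda|:\lambda\in A,\ g(\lambda)=0\}$.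 *)

theory Defs
  imports Complex_Main
begin

text \<open>Real Cayley--Dickson algebra A_m with all gamma_k = -1 (the locally-complex ones,
 up to isomorphism).  Elements of A_m are coordinate vectors nat => real supported on
 {0..<2^m}; an element of A_(m+1) is the pair (a,b) of A_m-elements, a = first half of
 coordinates, b = second half.\<close>

definition cd_carrier :: "nat \<Rightarrow> (nat \<Rightarrow> real) set" where
  "cd_carrier m = {x. \<forall>i\<ge>2^m. x i = 0}"

definition cd_lo :: "nat \<Rightarrow> (nat \<Rightarrow> real) \<Rightarrow> (nat \<Rightarrow> real)" where
  "cd_lo m x = (\<lambda>i. if i < 2^m then x i else 0)"

definition cd_hi :: "nat \<Rightarrow> (nat \<Rightarrow> real) \<Rightarrow> (nat \<Rightarrow> real)" where
  "cd_hi m x = (\<lambda>i. if i < 2^m then x (i + 2^m) else 0)"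

definition cd_join :: "nat \<Rightarrow> (nat \<Rightarrow> real) \<Rightarrow> (nat \<Rightarrow> real) \<Rightarrow> (nat \<Rightarrow> real)" where
  "cd_join m a b = (\<lambda>i. if i < 2^m then a i else if i < 2 * 2^m then b (i - 2^m) else 0)"

definition cd_zero :: "nat \<Rightarrow> real" where "cd_zero = (\<lambda>i. 0)"
definition cd_one :: "nat \<Rightarrow> real" where "cd_one = (\<lambda>i. if i = 0 then 1 else 0)"
definition cd_add :: "(nat \<Rightarrow> real) \<Rightarrow> (nat \<Rightarrow> real) \<Rightarrow> (nat \<Rightarrow> real)" where
  "cd_add x y = (\<lambda>i. x i + y i)"
definition cd_neg :: "(nat \<Rightarrow> real) \<Rightarrow> (nat \<Rightarrow> real)" where
  "cd_neg x = (\<lambda>i. - x i)"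
definition cd_scale :: "real \<Rightarrow> (nat \<Rightarrow> real) \<Rightarrow> (nat \<Rightarrow> real)" where
  "cd_scale c x = (\<lambda>i. c * x i)"

fun cd_cnj :: "nat \<Rightarrow> (nat \<Rightarrow> real) \<Rightarrow> (nat \<Rightarrow> real)" where
  "cd_cnj 0 x = (\<lambda>i. if i = 0 then x 0 else 0)"
| "cd_cnj (Suc m) x = cd_join m (cd_cnj m (cd_lo m x)) (cd_neg (cd_hi m x))"

text \<open>Product: (a,b)(c,d) = (ac + gamma conj(d) b, da + b conj(c)) with gamma = -1.\<close>
fun cd_mul :: "nat \<Rightarrow> (nat \<Rightarrow> real) \<Rightarrow> (nat \<Rightarrow> real) \<Rightarrow> (nat \<Rightarrow> real)" where
  "cd_mul 0 x y = (\<lambda>i. if i = 0 then x 0 * y 0 else 0)"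
| "cd_mul (Suc m) x y =
     cd_join m
       (cd_add (cd_mul m (cd_lo m x) (cd_lo m y))
               (cd_scale (-1) (cd_mul m (cd_cnj m (cd_hi m y)) (cd_hi m x))))
       (cd_add (cd_mul m (cd_hi m y) (cd_lo m x))
               (cd_mul m (cd_hi m x) (cd_cnj m (cd_lo m y))))"

text \<open>n(x) = conj(x) x is real (a multiple of 1); |x| = sqrt(n(x)).\<close>
definition cd_abs :: "nat \<Rightarrow> (nat \<Rightarrow> real) \<Rightarrow> real" where
  "cd_abs m x = sqrt (cd_mul m (cd_cnj m x) x 0)"

fun cd_pow :: "nat \<Rightarrow> (nat \<Rightarrow> real) \<Rightarrow> nat \<Rightarrow> (nat \<Rightarrow> real)" where
  "cd_pow m x 0 = cd_one"
| "cd_pow m x (Suc k) = cd_mul m x (cd_pow m x k)"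

definition cd_poly_eval ::
  "nat \<Rightarrow> (nat \<Rightarrow> nat \<Rightarrow> real) \<Rightarrow> nat \<Rightarrow> (nat \<Rightarrow> real) \<Rightarrow> (nat \<Rightarrow> real)" where
  "cd_poly_eval m c d r = (\<lambda>i. \<Sum>k\<le>d. cd_mul m (c k) (cd_pow m r k) i)"

definition monic_coeffs :: "nat \<Rightarrow> (nat \<Rightarrow> nat \<Rightarrow> real) \<Rightarrow> nat \<Rightarrow> nat \<Rightarrow> real" where
  "monic_coeffs n a = (\<lambda>k. if k < n then a k else if k = n then cd_one else cd_zero)"

definition deriv_coeffs :: "(nat \<Rightarrow> nat \<Rightarrow> real) \<Rightarrow> nat \<Rightarrow> nat \<Rightarrow> real" where
  "deriv_coeffs c = (\<lambda>k. cd_scale (real (Suc k)) (c (Suc k)))"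

text \<open>Spectral radius rho(g) = sup{|l| : l in A, g(l) = 0}; the empty sup is taken as 0.\<close>
definition cd_spec_rad :: "nat \<Rightarrow> (nat \<Rightarrow> nat \<Rightarrow> real) \<Rightarrow> nat \<Rightarrow> real" where
  "cd_spec_rad m c d =
     Sup (insert 0 {cd_abs m r | r. r \<in> cd_carrier m \<and> cd_poly_eval m c d r = cd_zero})"

definition R1 :: "nat \<Rightarrow> nat \<Rightarrow> (nat \<Rightarrow> nat \<Rightarrow> real) \<Rightarrow> real" where
  "R1 m n a = sqrt (1 + (\<Sum>k<n. (cd_abs m (a k))\<^sup>2))"
definition R2 :: "nat \<Rightarrow> nat \<Rightarrow> (nat \<Rightarrow> nat \<Rightarrow> real) \<Rightarrow> real" where
  "R2 m n a = 1 + (MAX k\<in>{..<n}. cd_abs m (a k))"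
definition R3 :: "nat \<Rightarrow> nat \<Rightarrow> (nat \<Rightarrow> nat \<Rightarrow> real) \<Rightarrow> real" where
  "R3 m n a = max 1 (\<Sum>k<n. cd_abs m (a k))"

end

(* Write r = r0 + v with r0 real and v imaginary, and put s = |v|. Since v v = -s^2, all powers
   of r lie in the plane spanned by 1 and v, and r |-> w = r0 + i s identifies this plane with the
   complex numbers. Let pi(x) be the orthogonal projection of x onto the plane, read as a complex
   number. The adjointness law <x y, z> = <x, z conj(y)>, valid in every Cayley--Dickson algebra,
   gives pi(c r^k) = pi(c) w^k. So if f(r) = 0, then w is a root of the complex polynomial with
   coefficients pi(a_k), where |w| = |r| and |pi(a_k)| <= |a_k|, hence
   |r|^n <= sum_k |a_k| |r|^k. A root of f' satisfies the same inequality after multiplying by |r|.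
   The set of x >= 0 with x^n <= sum_k |a_k| x^k is compact, so its supremum (Cauchy's bound) is
   attained. This supremum bounds both spectral radii, and the classical estimates for a solution
   of that inequality give R1, R2 and R3. *)

theory Submission
  imports Defs "HOL-Analysis.Convex" "HOL-Analysis.Elementary_Metric_Spaces"
begin

section \<open>Cayley--Dickson arithmetic\<close>

declare cd_mul.simps(2) [simp del] cd_cnj.simps(2) [simp del]

lemma cd_cnj_eq: "cd_cnj m x = (\<lambda>i. if i = 0 then x 0 else if i < 2^m then - x i else 0)"
  by (induction m arbitrary: x)
     (auto simp: cd_cnj.simps cd_join_def cd_lo_def cd_hi_def cd_neg_def fun_eq_iff)

lemma cd_lo_carrier [simp]: "cd_lo m x \<in> cd_carrier m"
  and cd_hi_carrier [simp]: "cd_hi m x \<in> cd_carrier m"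
  and cd_join_carrier [simp]: "cd_join m a b \<in> cd_carrier (Suc m)"
  and cd_cnj_carrier [simp]: "cd_cnj m x \<in> cd_carrier m"
  and cd_one_carrier [simp]: "cd_one \<in> cd_carrier m"
  and cd_zero_carrier [simp]: "cd_zero \<in> cd_carrier m"
  by (auto simp: cd_carrier_def cd_lo_def cd_hi_def cd_join_def cd_cnj_eq cd_one_def cd_zero_def)

lemma cd_mul_carrier [simp]: "cd_mul m x y \<in> cd_carrier m"
  by (cases m) (auto simp: cd_mul.simps cd_carrier_def cd_join_def)

lemma cd_add_carrier [simp]: "x \<in> cd_carrier m \<Longrightarrow> y \<in> cd_carrier m \<Longrightarrow> cd_add x y \<in> cd_carrier m"
  and cd_scale_carrier [simp]: "x \<in> cd_carrier m \<Longrightarrow> cd_scale t x \<in> cd_carrier m"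
  by (auto simp: cd_carrier_def cd_add_def cd_scale_def)

lemma cd_lo_join [simp]: "a \<in> cd_carrier m \<Longrightarrow> cd_lo m (cd_join m a b) = a"
  and cd_hi_join [simp]: "b \<in> cd_carrier m \<Longrightarrow> cd_hi m (cd_join m a b) = b"
  by (auto simp: cd_carrier_def cd_lo_def cd_hi_def cd_join_def fun_eq_iff)

lemma cd_carrier_SucE:
  assumes "x \<in> cd_carrier (Suc m)"
  obtains a b where "a \<in> cd_carrier m" "b \<in> cd_carrier m" "x = cd_join m a b"
proof
  show "x = cd_join m (cd_lo m x) (cd_hi m x)"
    using assms by (auto simp: cd_carrier_def cd_lo_def cd_hi_def cd_join_def fun_eq_iff)
qed simp_all

lemma cd_mul_join [simp]:
  "a \<in> cd_carrier m \<Longrightarrow> b \<in> cd_carrier m \<Longrightarrow> c \<in> cd_carrier m \<Longrightarrow> d \<in> cd_carrier m \<Longrightarrow>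
   cd_mul (Suc m) (cd_join m a b) (cd_join m c d) =
   cd_join m (cd_add (cd_mul m a c) (cd_scale (-1) (cd_mul m (cd_cnj m d) b)))
             (cd_add (cd_mul m d a) (cd_mul m b (cd_cnj m c)))"
  by (simp add: cd_mul.simps)

lemma cd_cnj_join [simp]:
  "a \<in> cd_carrier m \<Longrightarrow> b \<in> cd_carrier m \<Longrightarrow>
   cd_cnj (Suc m) (cd_join m a b) = cd_join m (cd_cnj m a) (cd_scale (-1) b)"
  by (simp add: cd_cnj.simps cd_neg_def cd_scale_def)

lemma cd_join_one: "cd_join m cd_one cd_zero = cd_one"
  and cd_join_scale_one: "cd_join m (cd_scale t cd_one) cd_zero = cd_scale t cd_one"
  by (auto simp: cd_join_def cd_add_def cd_scale_def cd_one_def cd_zero_def fun_eq_iff)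

lemma cd_add_zero_right [simp]: "cd_add x cd_zero = x"
  and cd_add_zero_left [simp]: "cd_add cd_zero x = x"
  and cd_scale_zero_left [simp]: "cd_scale 0 x = cd_zero"
  and cd_scale_zero_right [simp]: "cd_scale t cd_zero = cd_zero"
  and cd_scale_one [simp]: "cd_scale 1 x = x"
  and cd_scale_scale [simp]: "cd_scale s (cd_scale t x) = cd_scale (s * t) x"
  and cd_scale_right_distrib: "cd_scale t (cd_add x y) = cd_add (cd_scale t x) (cd_scale t y)"
  and cd_scale_left_distrib: "cd_scale (s + t) x = cd_add (cd_scale s x) (cd_scale t x)"
  and cd_add_commute: "cd_add x y = cd_add y x"
  and cd_add_minus_self [simp]: "cd_add x (cd_scale (-1) x) = cd_zero"
  by (auto simp: cd_add_def cd_scale_def cd_zero_def fun_eq_iff algebra_simps)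

lemma cd_lo_add [simp]: "cd_lo m (cd_add x y) = cd_add (cd_lo m x) (cd_lo m y)"
  and cd_hi_add [simp]: "cd_hi m (cd_add x y) = cd_add (cd_hi m x) (cd_hi m y)"
  and cd_lo_scale [simp]: "cd_lo m (cd_scale t x) = cd_scale t (cd_lo m x)"
  and cd_hi_scale [simp]: "cd_hi m (cd_scale t x) = cd_scale t (cd_hi m x)"
  by (auto simp: cd_lo_def cd_hi_def cd_add_def cd_scale_def fun_eq_iff)

lemma cd_cnj_add [simp]: "cd_cnj m (cd_add x y) = cd_add (cd_cnj m x) (cd_cnj m y)"
  and cd_cnj_scale [simp]: "cd_cnj m (cd_scale t x) = cd_scale t (cd_cnj m x)"
  and cd_cnj_one [simp]: "cd_cnj m cd_one = cd_one"
  and cd_cnj_zero [simp]: "cd_cnj m cd_zero = cd_zero"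
  by (auto simp: cd_cnj_eq cd_add_def cd_scale_def cd_one_def cd_zero_def fun_eq_iff)

lemma cd_cnj_cnj [simp]: "x \<in> cd_carrier m \<Longrightarrow> cd_cnj m (cd_cnj m x) = x"
  by (auto simp: cd_cnj_eq cd_carrier_def fun_eq_iff)

lemma cd_mul_add:
  "cd_mul m (cd_add x y) z = cd_add (cd_mul m x z) (cd_mul m y z) \<and>
   cd_mul m z (cd_add x y) = cd_add (cd_mul m z x) (cd_mul m z y)"
proof (induction m arbitrary: x y z)
  case (Suc m)
  show ?case
    by (simp add: cd_mul.simps Suc) (auto simp: cd_join_def cd_add_def cd_scale_def fun_eq_iff)
qed (auto simp: cd_add_def fun_eq_iff algebra_simps)

lemmas cd_mul_add_left = cd_mul_add [THEN conjunct1]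
  and cd_mul_add_right = cd_mul_add [THEN conjunct2]

lemma cd_mul_scale:
  "cd_mul m (cd_scale t x) z = cd_scale t (cd_mul m x z) \<and>
   cd_mul m z (cd_scale t x) = cd_scale t (cd_mul m z x)"
proof (induction m arbitrary: x z)
  case (Suc m)
  show ?case
    by (simp add: cd_mul.simps Suc)
       (auto simp: cd_join_def cd_add_def cd_scale_def fun_eq_iff algebra_simps)
qed (auto simp: cd_scale_def fun_eq_iff)

lemmas cd_mul_scale_left = cd_mul_scale [THEN conjunct1]
  and cd_mul_scale_right = cd_mul_scale [THEN conjunct2]

lemma cd_mul_zero_right [simp]: "cd_mul m x cd_zero = cd_zero"
  and cd_mul_zero_left [simp]: "cd_mul m cd_zero x = cd_zero"
  using cd_mul_scale_right [where t = 0 and x = cd_zero and z = x]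
    cd_mul_scale_left [where t = 0 and x = cd_zero and z = x] by simp_all

lemma cd_mul_one: "x \<in> cd_carrier m \<Longrightarrow> cd_mul m cd_one x = x \<and> cd_mul m x cd_one = x"
proof (induction m arbitrary: x)
  case 0
  then show ?case by (auto simp: cd_carrier_def cd_one_def fun_eq_iff)
next
  case (Suc m)
  then obtain a b where "a \<in> cd_carrier m" "b \<in> cd_carrier m" "x = cd_join m a b"
    by (elim cd_carrier_SucE)
  then show ?case
    using Suc.IH by (subst (1 2) cd_join_one [symmetric, of m]) simp
qed

lemmas cd_mul_one_left [simp] = cd_mul_one [THEN conjunct1]
  and cd_mul_one_right [simp] = cd_mul_one [THEN conjunct2]

lemma cd_cnj_mul:
  "x \<in> cd_carrier m \<Longrightarrow> y \<in> cd_carrier m \<Longrightarrow>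
   cd_cnj m (cd_mul m x y) = cd_mul m (cd_cnj m y) (cd_cnj m x)"
proof (induction m arbitrary: x y)
  case 0
  then show ?case by (auto simp: fun_eq_iff)
next
  case (Suc m)
  obtain a b where "a \<in> cd_carrier m" "b \<in> cd_carrier m" "x = cd_join m a b"
    using Suc.prems(1) by (elim cd_carrier_SucE)
  moreover obtain c d where "c \<in> cd_carrier m" "d \<in> cd_carrier m" "y = cd_join m c d"
    using Suc.prems(2) by (elim cd_carrier_SucE)
  ultimately show ?case
    using Suc.IH [of a c] Suc.IH [of "cd_cnj m d" b]
    by (simp add: cd_mul_scale_left cd_mul_scale_right cd_scale_right_distrib cd_add_commute)
qed

section \<open>The inner product and adjointness\<close>

definition cd_inner :: "nat \<Rightarrow> (nat \<Rightarrow> real) \<Rightarrow> (nat \<Rightarrow> real) \<Rightarrow> real" where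
  "cd_inner m x y = (\<Sum>i<2^m. x i * y i)"

lemma cd_inner_join:
  "cd_inner (Suc m) (cd_join m a b) (cd_join m c d) = cd_inner m a c + cd_inner m b d"
proof -
  let ?f = "\<lambda>i. cd_join m a b i * cd_join m c d i"
  have "cd_inner (Suc m) (cd_join m a b) (cd_join m c d) =
      sum ?f {0..<2^m} + sum ?f {2^m..<2^m + 2^m}"
    by (simp add: cd_inner_def lessThan_atLeast0 mult_2 sum.atLeastLessThan_concat)
  also have "sum ?f {2^m..<2^m + 2^m} = sum (\<lambda>i. ?f (i + 2^m)) {0..<2^m}"
    using sum.shift_bounds_nat_ivl [of ?f 0 "2^m" "2^m"] by simp
  finally show ?thesis
    by (simp add: cd_inner_def lessThan_atLeast0 cd_join_def)
qed

lemma cd_inner_add_left: "cd_inner m (cd_add x y) z = cd_inner m x z + cd_inner m y z"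
  and cd_inner_add_right: "cd_inner m z (cd_add x y) = cd_inner m z x + cd_inner m z y"
  and cd_inner_scale_left: "cd_inner m (cd_scale t x) z = t * cd_inner m x z"
  and cd_inner_scale_right: "cd_inner m z (cd_scale t x) = t * cd_inner m z x"
  and cd_inner_zero_left [simp]: "cd_inner m cd_zero z = 0"
  by (auto simp: cd_inner_def cd_add_def cd_scale_def cd_zero_def algebra_simps
      sum.distrib sum_distrib_left)

lemma cd_inner_sum_left: "cd_inner m (\<lambda>i. \<Sum>k\<in>K. g k i) z = (\<Sum>k\<in>K. cd_inner m (g k) z)"
  unfolding cd_inner_def sum_distrib_right by (rule sum.swap)

lemma cd_inner_commute: "cd_inner m x y = cd_inner m y x"
  by (simp add: cd_inner_def mult.commute)

lemma cd_inner_one_right: "cd_inner m x cd_one = x 0"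
  by (simp add: cd_inner_def cd_one_def if_distrib cong: if_cong)

lemma cd_inner_one_one [simp]: "cd_inner m cd_one cd_one = 1"
  using cd_inner_one_right [of m cd_one] by (simp add: cd_one_def)

lemma cd_inner_cnj_cnj [simp]: "cd_inner m (cd_cnj m x) (cd_cnj m y) = cd_inner m x y"
  by (auto simp: cd_inner_def cd_cnj_eq intro!: sum.cong)

lemma cd_inner_self_nonneg: "0 \<le> cd_inner m x x"
  by (simp add: cd_inner_def sum_nonneg)

lemma cd_inner_self_eq_0: "x \<in> cd_carrier m \<Longrightarrow> cd_inner m x x = 0 \<longleftrightarrow> x = cd_zero"
  by (auto simp: cd_inner_def cd_carrier_def cd_zero_def fun_eq_iff sum_nonneg_eq_0_iff)
     (metis lessThan_iff not_le)

lemma cd_cnj_mul_self: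
  "x \<in> cd_carrier m \<Longrightarrow> cd_mul m (cd_cnj m x) x = cd_scale (cd_inner m x x) cd_one"
proof (induction m arbitrary: x)
  case 0
  then show ?case by (auto simp: cd_scale_def cd_one_def cd_inner_def fun_eq_iff)
next
  case (Suc m)
  then obtain a b where "a \<in> cd_carrier m" "b \<in> cd_carrier m" "x = cd_join m a b"
    by (elim cd_carrier_SucE)
  then show ?case
    using Suc.IH [of a] Suc.IH [of b]
    by (simp add: cd_inner_join cd_mul_scale_left cd_mul_scale_right cd_join_scale_one
        flip: cd_scale_left_distrib)
qed

lemma cd_abs_eq: "x \<in> cd_carrier m \<Longrightarrow> cd_abs m x = sqrt (cd_inner m x x)"
  by (simp add: cd_abs_def cd_cnj_mul_self cd_scale_def cd_one_def)

lemma cd_abs_nonneg: "x \<in> cd_carrier m \<Longrightarrow> 0 \<le> cd_abs m x"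
  by (simp add: cd_abs_eq cd_inner_self_nonneg)

text \<open>The two adjointness laws are proved together: conjugation turns the right law at level m
  into the left law at level m, and both are needed for the right law at level m + 1.\<close>

lemma cd_inner_mul_left_of_right:
  assumes right: "\<And>x y z. x \<in> cd_carrier m \<Longrightarrow> y \<in> cd_carrier m \<Longrightarrow> z \<in> cd_carrier m \<Longrightarrow>
      cd_inner m (cd_mul m x y) z = cd_inner m x (cd_mul m z (cd_cnj m y))"
    and "x \<in> cd_carrier m" "y \<in> cd_carrier m" "z \<in> cd_carrier m"
  shows "cd_inner m (cd_mul m x y) z = cd_inner m y (cd_mul m (cd_cnj m x) z)"
proof -
  have "cd_inner m (cd_mul m x y) z = cd_inner m (cd_mul m (cd_cnj m y) (cd_cnj m x)) (cd_cnj m z)"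
    using assms(2,3) by (simp flip: cd_cnj_mul)
  also have "\<dots> = cd_inner m (cd_cnj m y) (cd_mul m (cd_cnj m z) x)"
    using right [of "cd_cnj m y" "cd_cnj m x" "cd_cnj m z"] assms(2) by simp
  also have "\<dots> = cd_inner m y (cd_mul m (cd_cnj m x) z)"
    using assms(2-4) by (simp flip: cd_inner_cnj_cnj [of m y] add: cd_cnj_mul)
  finally show ?thesis .
qed

lemma cd_inner_mul_right:
  "x \<in> cd_carrier m \<Longrightarrow> y \<in> cd_carrier m \<Longrightarrow> z \<in> cd_carrier m \<Longrightarrow>
   cd_inner m (cd_mul m x y) z = cd_inner m x (cd_mul m z (cd_cnj m y))"
proof (induction m arbitrary: x y z)
  case 0
  then show ?case by (simp add: cd_inner_def mult.commute)
next
  case (Suc m)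
  obtain a b where ab: "a \<in> cd_carrier m" "b \<in> cd_carrier m" "x = cd_join m a b"
    using Suc.prems(1) by (elim cd_carrier_SucE)
  obtain c d where cd: "c \<in> cd_carrier m" "d \<in> cd_carrier m" "y = cd_join m c d"
    using Suc.prems(2) by (elim cd_carrier_SucE)
  obtain e f where ef: "e \<in> cd_carrier m" "f \<in> cd_carrier m" "z = cd_join m e f"
    using Suc.prems(3) by (elim cd_carrier_SucE)
  have left: "cd_inner m (cd_mul m p q) r = cd_inner m q (cd_mul m (cd_cnj m p) r)"
    if "p \<in> cd_carrier m" "q \<in> cd_carrier m" "r \<in> cd_carrier m" for p q r
    using Suc.IH that by (rule cd_inner_mul_left_of_right)
  have lhs: "cd_inner (Suc m) (cd_mul (Suc m) x y) z =
      cd_inner m (cd_mul m a c) e - cd_inner m (cd_mul m (cd_cnj m d) b) e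
      + cd_inner m (cd_mul m d a) f + cd_inner m (cd_mul m b (cd_cnj m c)) f"
    using ab cd ef by (simp add: cd_inner_join cd_inner_add_left cd_inner_scale_left)
  have rhs: "cd_inner (Suc m) x (cd_mul (Suc m) z (cd_cnj (Suc m) y)) =
      cd_inner m a (cd_mul m e (cd_cnj m c)) + cd_inner m a (cd_mul m (cd_cnj m d) f)
      - cd_inner m b (cd_mul m d e) + cd_inner m b (cd_mul m f c)"
    using ab cd ef
    by (simp add: cd_inner_join cd_inner_add_right cd_inner_scale_right cd_mul_scale_left
        cd_mul_scale_right)
  have "cd_inner m (cd_mul m a c) e = cd_inner m a (cd_mul m e (cd_cnj m c))"
    by (rule Suc.IH [OF ab(1) cd(1) ef(1)])
  moreover have "cd_inner m (cd_mul m b (cd_cnj m c)) f = cd_inner m b (cd_mul m f c)"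
    using Suc.IH [OF ab(2) cd_cnj_carrier ef(2)] cd(1) by simp
  moreover have "cd_inner m (cd_mul m (cd_cnj m d) b) e = cd_inner m b (cd_mul m d e)"
    using left [OF cd_cnj_carrier ab(2) ef(1)] cd(2) by simp
  moreover have "cd_inner m (cd_mul m d a) f = cd_inner m a (cd_mul m (cd_cnj m d) f)"
    by (rule left [OF cd(2) ab(1) ef(2)])
  ultimately show ?case
    unfolding lhs rhs by linarith
qed

section \<open>The complex plane through an element\<close>

definition cd_im :: "(nat \<Rightarrow> real) \<Rightarrow> nat \<Rightarrow> real" where
  "cd_im r = (\<lambda>i. if i = 0 then 0 else r i)"

lemma cd_im_carrier [simp]: "r \<in> cd_carrier m \<Longrightarrow> cd_im r \<in> cd_carrier m"
  by (simp add: cd_im_def cd_carrier_def)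

lemma cd_re_im_decomp: "r = cd_add (cd_scale (r 0) cd_one) (cd_im r)"
  by (auto simp: cd_im_def cd_add_def cd_scale_def cd_one_def fun_eq_iff)

lemma cd_cnj_im: "r \<in> cd_carrier m \<Longrightarrow> cd_cnj m (cd_im r) = cd_scale (-1) (cd_im r)"
  by (auto simp: cd_cnj_eq cd_im_def cd_scale_def cd_carrier_def fun_eq_iff)

lemma cd_inner_im_one [simp]: "cd_inner m (cd_im r) cd_one = 0"
  and cd_inner_one_im [simp]: "cd_inner m cd_one (cd_im r) = 0"
  by (simp_all add: cd_inner_one_right cd_inner_commute [of m cd_one] cd_im_def)

lemma cd_abs_im_sq: "r \<in> cd_carrier m \<Longrightarrow> (cd_abs m (cd_im r))\<^sup>2 = cd_inner m (cd_im r) (cd_im r)"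
  by (simp add: cd_abs_eq cd_inner_self_nonneg)

lemma cd_mul_im_im:
  assumes "r \<in> cd_carrier m"
  shows "cd_mul m (cd_im r) (cd_im r) = cd_scale (- (cd_abs m (cd_im r))\<^sup>2) cd_one"
proof -
  have "cd_scale (-1) (cd_mul m (cd_im r) (cd_im r)) = cd_scale ((cd_abs m (cd_im r))\<^sup>2) cd_one"
    using cd_cnj_mul_self [of "cd_im r" m] assms
    by (simp add: cd_cnj_im cd_mul_scale_left cd_abs_im_sq)
  then have "cd_scale (-1) (cd_scale (-1) (cd_mul m (cd_im r) (cd_im r))) =
      cd_scale (-1) (cd_scale ((cd_abs m (cd_im r))\<^sup>2) cd_one)"
    by (rule arg_cong)
  then show ?thesis by simp
qed

lemma cd_im_eq_zero: "r \<in> cd_carrier m \<Longrightarrow> cd_abs m (cd_im r) = 0 \<Longrightarrow> cd_im r = cd_zero"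
  by (simp add: cd_abs_eq cd_inner_self_eq_0)

lemma cd_inner_self_re_im: "cd_inner m r r = (r 0)\<^sup>2 + cd_inner m (cd_im r) (cd_im r)"
  by (subst (1 2) cd_re_im_decomp)
     (simp add: cd_inner_add_left cd_inner_add_right cd_inner_scale_left cd_inner_scale_right
       power2_eq_square)

text \<open>cd_proj m r x are the coordinates of x in the orthonormal basis 1, v/|v| of the plane
  through 1 and r, where v = cd_im r. For real r the division by |v| = 0 yields the junk value 0,
  which is harmless since then v = 0.\<close>

definition cd_to_complex :: "nat \<Rightarrow> (nat \<Rightarrow> real) \<Rightarrow> complex" where
  "cd_to_complex m r = Complex (r 0) (cd_abs m (cd_im r))"

definition cd_proj :: "nat \<Rightarrow> (nat \<Rightarrow> real) \<Rightarrow> (nat \<Rightarrow> real) \<Rightarrow> complex" where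
  "cd_proj m r x = Complex (cd_inner m x cd_one) (cd_inner m x (cd_im r) / cd_abs m (cd_im r))"

lemma cd_pow_eq_complex:
  assumes r: "r \<in> cd_carrier m"
  shows "\<exists>p q. cd_pow m r k = cd_add (cd_scale p cd_one) (cd_scale q (cd_im r)) \<and>
    cd_to_complex m r ^ k = Complex p (cd_abs m (cd_im r) * q)"
proof (induction k)
  case 0
  show ?case by (rule exI [of _ 1], rule exI [of _ 0]) (simp add: complex_eq_iff)
next
  case (Suc k)
  then obtain p q where pq: "cd_pow m r k = cd_add (cd_scale p cd_one) (cd_scale q (cd_im r))"
    "cd_to_complex m r ^ k = Complex p (cd_abs m (cd_im r) * q)"
    by blast
  let ?s = "cd_abs m (cd_im r)"
  let ?p = "r 0 * p - ?s\<^sup>2 * q" and ?q = "r 0 * q + p"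
  have "cd_pow m r (Suc k) = cd_mul m (cd_add (cd_scale (r 0) cd_one) (cd_im r))
      (cd_add (cd_scale p cd_one) (cd_scale q (cd_im r)))"
    using pq(1) by (simp flip: cd_re_im_decomp)
  also have "\<dots> = cd_add (cd_scale ?p cd_one) (cd_scale ?q (cd_im r))"
    using r
    by (simp add: cd_mul_add_left cd_mul_add_right cd_mul_scale_left cd_mul_scale_right
        cd_mul_im_im)
       (simp add: cd_add_def cd_scale_def fun_eq_iff algebra_simps)
  finally have "cd_pow m r (Suc k) = cd_add (cd_scale ?p cd_one) (cd_scale ?q (cd_im r))" .
  moreover have "cd_to_complex m r ^ Suc k = Complex ?p (?s * ?q)"
    using pq(2) by (simp add: cd_to_complex_def complex_eq_iff algebra_simps power2_eq_square)
  ultimately show ?case by blast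
qed

lemma cd_proj_add: "cd_proj m r (cd_add x y) = cd_proj m r x + cd_proj m r y"
  and cd_proj_scale: "cd_proj m r (cd_scale t x) = of_real t * cd_proj m r x"
  and cd_proj_zero [simp]: "cd_proj m r cd_zero = 0"
  and cd_proj_one [simp]: "cd_proj m r cd_one = 1"
  by (simp_all add: cd_proj_def complex_eq_iff cd_inner_add_left cd_inner_scale_left
      add_divide_distrib)

lemma cd_proj_sum: "cd_proj m r (\<lambda>i. \<Sum>k\<in>K. g k i) = (\<Sum>k\<in>K. cd_proj m r (g k))"
  by (simp add: cd_proj_def complex_eq_iff cd_inner_sum_left Re_sum Im_sum sum_divide_distrib)

lemma cd_proj_mul_im:
  assumes r: "r \<in> cd_carrier m" and c: "c \<in> cd_carrier m"
  shows "cd_proj m r (cd_mul m c (cd_im r)) = cd_proj m r c * Complex 0 (cd_abs m (cd_im r))"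
proof (cases "cd_abs m (cd_im r) = 0")
  case True
  then show ?thesis using cd_im_eq_zero [OF r] by (simp add: Complex_eq_0)
next
  case False
  have "cd_inner m (cd_mul m c (cd_im r)) cd_one = - cd_inner m c (cd_im r)"
    using r c by (simp add: cd_inner_mul_right cd_cnj_im cd_inner_scale_right)
  moreover have "cd_inner m (cd_mul m c (cd_im r)) (cd_im r) =
      (cd_abs m (cd_im r))\<^sup>2 * cd_inner m c cd_one"
    using r c
    by (simp add: cd_inner_mul_right cd_cnj_im cd_mul_scale_right cd_mul_im_im cd_inner_scale_right)
  ultimately show ?thesis
    using False by (simp add: cd_proj_def complex_eq_iff power2_eq_square)
qed

lemma cd_proj_mul_pow:
  assumes r: "r \<in> cd_carrier m" and c: "c \<in> cd_carrier m"
  shows "cd_proj m r (cd_mul m c (cd_pow m r k)) = cd_proj m r c * cd_to_complex m r ^ k"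
proof -
  obtain p q where pq: "cd_pow m r k = cd_add (cd_scale p cd_one) (cd_scale q (cd_im r))"
    "cd_to_complex m r ^ k = Complex p (cd_abs m (cd_im r) * q)"
    using cd_pow_eq_complex [OF r] by blast
  have "cd_mul m c (cd_pow m r k) = cd_add (cd_scale p c) (cd_scale q (cd_mul m c (cd_im r)))"
    using c unfolding pq(1) by (simp add: cd_mul_add_right cd_mul_scale_right)
  then have "cd_proj m r (cd_mul m c (cd_pow m r k)) =
      of_real p * cd_proj m r c + of_real q * (cd_proj m r c * Complex 0 (cd_abs m (cd_im r)))"
    by (simp add: cd_proj_add cd_proj_scale cd_proj_mul_im [OF r c])
  also have "\<dots> = cd_proj m r c * cd_to_complex m r ^ k"
    unfolding pq(2) by (simp add: complex_eq_iff algebra_simps)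
  finally show ?thesis .
qed

lemma cd_proj_poly_eval:
  assumes "r \<in> cd_carrier m" and "\<forall>k\<le>d. c k \<in> cd_carrier m"
  shows "cd_proj m r (cd_poly_eval m c d r) = (\<Sum>k\<le>d. cd_proj m r (c k) * cd_to_complex m r ^ k)"
  unfolding cd_poly_eval_def cd_proj_sum using assms by (simp add: cd_proj_mul_pow)

lemma norm_cd_to_complex: "r \<in> cd_carrier m \<Longrightarrow> cmod (cd_to_complex m r) = cd_abs m r"
  by (simp add: cmod_def cd_to_complex_def cd_abs_im_sq cd_abs_eq [of r]
      cd_inner_self_re_im [of m r])

lemma norm_cd_proj_le:
  assumes r: "r \<in> cd_carrier m" and x: "x \<in> cd_carrier m"
  shows "cmod (cd_proj m r x) \<le> cd_abs m x"
proof -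
  define A where "A = cd_inner m x cd_one"
  define B where "B = cd_inner m x (cd_im r)"
  define s where "s = cd_abs m (cd_im r)"
  have "A\<^sup>2 + (B / s)\<^sup>2 \<le> cd_inner m x x"
  proof (cases "s = 0")
    case True
    have "A\<^sup>2 = x 0 * x 0"
      by (simp add: A_def cd_inner_one_right power2_eq_square)
    also have "\<dots> \<le> cd_inner m x x"
      unfolding cd_inner_def by (rule member_le_sum [where f = "\<lambda>i. x i * x i"]) auto
    finally show ?thesis using True by simp
  next
    case False
    define u
      where "u = cd_add x (cd_add (cd_scale (- A) cd_one) (cd_scale (- (B / s\<^sup>2)) (cd_im r)))"
    have "cd_inner m cd_one x = A" "cd_inner m (cd_im r) x = B"
      "cd_inner m (cd_im r) (cd_im r) = s\<^sup>2"
      by (simp_all add: A_def B_def s_def cd_inner_commute cd_abs_im_sq [OF r])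
    then have "cd_inner m u u = cd_inner m x x - A\<^sup>2 - (B / s)\<^sup>2"
      using False unfolding u_def
      by (simp add: cd_inner_add_left cd_inner_add_right cd_inner_scale_left cd_inner_scale_right
          A_def [symmetric] B_def [symmetric] field_simps power2_eq_square)
    then show ?thesis using cd_inner_self_nonneg [of m u] by simp
  qed
  then have "sqrt (A\<^sup>2 + (B / s)\<^sup>2) \<le> sqrt (cd_inner m x x)"
    by (rule real_sqrt_le_mono)
  then show ?thesis
    using x by (simp add: cd_proj_def cmod_def A_def B_def s_def cd_abs_eq)
qed

lemma norm_poly_root_bound:
  fixes c :: "nat \<Rightarrow> 'a::real_normed_field"
  assumes "(\<Sum>k\<le>d. c k * z ^ k) = 0"
  shows "norm (c d) * norm z ^ d \<le> (\<Sum>k<d. norm (c k) * norm z ^ k)"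
proof -
  have lead: "c d * z ^ d = - (\<Sum>k<d. c k * z ^ k)"
    using assms by (simp add: lessThan_Suc_atMost [symmetric] eq_neg_iff_add_eq_0 add.commute)
  have "norm (c d) * norm z ^ d = norm (c d * z ^ d)"
    by (simp add: norm_mult norm_power)
  also have "\<dots> = norm (\<Sum>k<d. c k * z ^ k)"
    using lead by simp
  also have "\<dots> \<le> (\<Sum>k<d. norm (c k) * norm z ^ k)"
    by (rule order_trans [OF norm_sum]) (simp add: norm_mult norm_power)
  finally show ?thesis .
qed

lemma cd_poly_root_bound:
  assumes r: "r \<in> cd_carrier m" and c: "\<forall>k\<le>d. c k \<in> cd_carrier m"
    and root: "cd_poly_eval m c d r = cd_zero"
  shows "cmod (cd_proj m r (c d)) * cd_abs m r ^ d \<le>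
    (\<Sum>k<d. cmod (cd_proj m r (c k)) * cd_abs m r ^ k)"
proof -
  have "(\<Sum>k\<le>d. cd_proj m r (c k) * cd_to_complex m r ^ k) = 0"
    using cd_proj_poly_eval [OF r c] root by simp
  from norm_poly_root_bound [OF this] show ?thesis
    using r by (simp add: norm_cd_to_complex)
qed

lemma monic_coeffs_carrier:
  "\<forall>k<n. a k \<in> cd_carrier m \<Longrightarrow> monic_coeffs n a k \<in> cd_carrier m"
  by (simp add: monic_coeffs_def)

lemma monic_root_bound:
  assumes a: "\<forall>k<n. a k \<in> cd_carrier m" and r: "r \<in> cd_carrier m"
    and root: "cd_poly_eval m (monic_coeffs n a) n r = cd_zero"
  shows "cd_abs m r ^ n \<le> (\<Sum>k<n. cd_abs m (a k) * cd_abs m r ^ k)"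
proof -
  have "cd_abs m r ^ n \<le> (\<Sum>k<n. cmod (cd_proj m r (monic_coeffs n a k)) * cd_abs m r ^ k)"
    using cd_poly_root_bound [OF r _ root] monic_coeffs_carrier [OF a]
    by (simp add: monic_coeffs_def)
  also have "\<dots> \<le> (\<Sum>k<n. cd_abs m (a k) * cd_abs m r ^ k)"
    using a r norm_cd_proj_le
    by (intro sum_mono mult_right_mono) (auto simp: monic_coeffs_def cd_abs_nonneg)
  finally show ?thesis .
qed

lemma deriv_root_bound:
  assumes n: "n \<ge> 1" and a: "\<forall>k<n. a k \<in> cd_carrier m" and r: "r \<in> cd_carrier m"
    and root: "cd_poly_eval m (deriv_coeffs (monic_coeffs n a)) (n - 1) r = cd_zero"
  shows "cd_abs m r ^ n \<le> (\<Sum>k<n. cd_abs m (a k) * cd_abs m r ^ k)"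
proof -
  obtain N where N: "n = Suc N" using n by (cases n) auto
  let ?b = "\<lambda>k. cd_abs m (a k)" and ?x = "cd_abs m r"
  have "\<forall>k\<le>N. deriv_coeffs (monic_coeffs n a) k \<in> cd_carrier m"
    by (simp add: deriv_coeffs_def monic_coeffs_carrier [OF a])
  moreover have "cd_proj m r (deriv_coeffs (monic_coeffs n a) N) = of_nat n"
    by (simp add: N deriv_coeffs_def monic_coeffs_def cd_proj_scale del: of_nat_Suc)
  ultimately have "real n * ?x ^ N \<le>
      (\<Sum>k<N. cmod (cd_proj m r (deriv_coeffs (monic_coeffs n a) k)) * ?x ^ k)"
    using cd_poly_root_bound [OF r _ root [unfolded N diff_Suc_1]] N by (simp del: of_nat_Suc)
  also have "\<dots> \<le> (\<Sum>k<N. real n * (?b (Suc k) * ?x ^ k))"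
  proof (intro sum_mono)
    fix k assume k: "k \<in> {..<N}"
    have "cmod (cd_proj m r (deriv_coeffs (monic_coeffs n a) k)) =
        real (Suc k) * cmod (cd_proj m r (a (Suc k)))"
      using k by (simp add: N deriv_coeffs_def monic_coeffs_def cd_proj_scale norm_mult
          del: of_nat_Suc)
    also have "\<dots> \<le> real n * ?b (Suc k)"
      using k a r by (intro mult_mono norm_cd_proj_le) (auto simp: N)
    finally show "cmod (cd_proj m r (deriv_coeffs (monic_coeffs n a) k)) * ?x ^ k \<le>
        real n * (?b (Suc k) * ?x ^ k)"
      unfolding mult.assoc [symmetric] using r
      by (intro mult_right_mono) (simp_all add: cd_abs_nonneg)
  qed
  finally have "?x ^ N \<le> (\<Sum>k<N. ?b (Suc k) * ?x ^ k)"
    using N by (simp add: sum_distrib_left [symmetric])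
  then have "?x * ?x ^ N \<le> ?x * (\<Sum>k<N. ?b (Suc k) * ?x ^ k)"
    using r by (simp add: mult_left_mono cd_abs_nonneg)
  then have "?x ^ n \<le> (\<Sum>k<N. ?b (Suc k) * ?x ^ Suc k)"
    by (simp add: N sum_distrib_left mult.left_commute)
  also have "\<dots> \<le> ?b 0 * ?x ^ 0 + (\<Sum>k<N. ?b (Suc k) * ?x ^ Suc k)"
    using a N by (simp add: cd_abs_nonneg)
  also have "\<dots> = (\<Sum>k<n. ?b k * ?x ^ k)"
    unfolding N sum.lessThan_Suc_shift ..
  finally show ?thesis .
qed

section \<open>Cauchy's root bound\<close>

lemma pow_le_poly_imp_le_max_sum:
  fixes x :: real
  assumes x: "0 \<le> x" and b: "\<forall>k<d. 0 \<le> b k" and root: "x ^ d \<le> (\<Sum>k<d. b k * x ^ k)"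
  shows "x \<le> max 1 (\<Sum>k<d. b k)"
proof (cases "x \<le> 1")
  case False
  have "d \<noteq> 0" using root False by (intro notI) simp
  then obtain e where d: "d = Suc e" by (cases d) auto
  have "x * x ^ e \<le> (\<Sum>k<d. b k * x ^ k)" using root by (simp add: d)
  also have "\<dots> \<le> (\<Sum>k<d. b k * x ^ e)"
    using b False by (intro sum_mono mult_left_mono power_increasing) (auto simp: d)
  also have "\<dots> = (\<Sum>k<d. b k) * x ^ e" by (simp add: sum_distrib_right)
  finally have "x \<le> (\<Sum>k<d. b k)" using False by simp
  then show ?thesis by simp
qed simp

lemma pow_le_geometric_imp_less:
  fixes x K :: real
  assumes x: "0 \<le> x" and K: "0 \<le> K" and root: "x ^ d \<le> K * (\<Sum>k<d. x ^ k)"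
  shows "x < 1 + K"
proof (rule ccontr)
  assume "\<not> x < 1 + K"
  then have x1: "1 + K \<le> x" by simp
  then have "1 \<le> x ^ d" using K by (simp add: one_le_power)
  have "K * x ^ d \<le> (x - 1) * x ^ d" using x1 x by (simp add: mult_right_mono)
  also have "\<dots> \<le> (x - 1) * (K * (\<Sum>k<d. x ^ k))" using x1 K root by (simp add: mult_left_mono)
  also have "\<dots> = K * ((x - 1) * (\<Sum>k<d. x ^ k))" by (simp only: mult.left_commute)
  also have "(x - 1) * (\<Sum>k<d. x ^ k) = x ^ d - 1"
    using one_diff_power_eq [of x d] by (simp add: algebra_simps)
  finally show False using \<open>1 \<le> x ^ d\<close> K root by (simp add: algebra_simps)
qed

lemma pow_le_poly_imp_less_one_plus_bound:
  fixes x M :: real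
  assumes x: "0 \<le> x" and M: "0 \<le> M" "\<forall>k<d. b k \<le> M" and root: "x ^ d \<le> (\<Sum>k<d. b k * x ^ k)"
  shows "x < 1 + M"
proof (rule pow_le_geometric_imp_less [OF x M(1)])
  have "(\<Sum>k<d. b k * x ^ k) \<le> (\<Sum>k<d. M * x ^ k)"
    using M x by (intro sum_mono mult_right_mono) auto
  then show "x ^ d \<le> M * (\<Sum>k<d. x ^ k)" using root by (simp add: sum_distrib_left)
qed

lemma pow_le_poly_imp_less_sqrt:
  fixes x :: real
  assumes x: "0 \<le> x" and root: "x ^ d \<le> (\<Sum>k<d. b k * x ^ k)"
  shows "x < sqrt (1 + (\<Sum>k<d. (b k)\<^sup>2))"
proof -
  have "(x\<^sup>2) ^ d = (x ^ d)\<^sup>2" by (simp add: power_mult [symmetric] mult.commute)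
  also have "\<dots> \<le> (\<Sum>k<d. b k * x ^ k)\<^sup>2" using root x by (simp add: power_mono)
  also have "\<dots> \<le> (\<Sum>k<d. (b k)\<^sup>2) * (\<Sum>k<d. (x\<^sup>2) ^ k)"
    using Cauchy_Schwarz_ineq_sum [of b "\<lambda>k. x ^ k" "{..<d}"]
    by (simp add: power_mult [symmetric] mult.commute)
  finally have "x\<^sup>2 < 1 + (\<Sum>k<d. (b k)\<^sup>2)"
    by (rule pow_le_geometric_imp_less [rotated 2]) (auto intro: sum_nonneg)
  then show ?thesis using x real_less_rsqrt by blast
qed

text \<open>For nonnegative b, not all zero, this is the unique positive root of
  x^d = b 0 + ... + b (d - 1) x^(d - 1): Cauchy's bound for the roots of a monic polynomial whose
  lower coefficients have moduli b k.\<close>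

definition cauchy_radius :: "nat \<Rightarrow> (nat \<Rightarrow> real) \<Rightarrow> real" where
  "cauchy_radius d b = Sup (insert 0 {x. 0 \<le> x \<and> x ^ d \<le> (\<Sum>k<d. b k * x ^ k)})"

lemma bdd_above_cauchy_set:
  "\<forall>k<d. 0 \<le> b k \<Longrightarrow> bdd_above (insert 0 {x::real. 0 \<le> x \<and> x ^ d \<le> (\<Sum>k<d. b k * x ^ k)})"
  by (rule bdd_aboveI [of _ "max 1 (\<Sum>k<d. b k)"]) (auto dest: pow_le_poly_imp_le_max_sum)

lemma cauchy_radius_upper:
  "\<forall>k<d. 0 \<le> b k \<Longrightarrow> 0 \<le> x \<Longrightarrow> x ^ d \<le> (\<Sum>k<d. b k * x ^ k) \<Longrightarrow> x \<le> cauchy_radius d b"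
  unfolding cauchy_radius_def by (rule cSup_upper) (use bdd_above_cauchy_set [of d b] in auto)

lemma cauchy_radius_nonneg: "\<forall>k<d. 0 \<le> b k \<Longrightarrow> 0 \<le> cauchy_radius d b"
  unfolding cauchy_radius_def by (rule cSup_upper) (use bdd_above_cauchy_set [of d b] in auto)

lemma cauchy_radius_attained:
  assumes "\<forall>k<d. 0 \<le> b k"
  shows "cauchy_radius d b = 0 \<or> cauchy_radius d b ^ d \<le> (\<Sum>k<d. b k * cauchy_radius d b ^ k)"
proof -
  have "closed {x::real. 0 \<le> x \<and> x ^ d \<le> (\<Sum>k<d. b k * x ^ k)}"
    by (intro closed_Collect_conj closed_Collect_le continuous_intros)
  then have "cauchy_radius d b \<in> insert 0 {x. 0 \<le> x \<and> x ^ d \<le> (\<Sum>k<d. b k * x ^ k)}"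
    unfolding cauchy_radius_def using bdd_above_cauchy_set [OF assms]
    by (intro closed_contains_Sup closed_insert) auto
  then show ?thesis by blast
qed

lemma cauchy_radius_less_sqrt:
  assumes "\<forall>k<d. 0 \<le> b k"
  shows "cauchy_radius d b < sqrt (1 + (\<Sum>k<d. (b k)\<^sup>2))"
proof -
  have "0 < sqrt (1 + (\<Sum>k<d. (b k)\<^sup>2))" by (simp add: add_pos_nonneg sum_nonneg)
  then show ?thesis
    using cauchy_radius_attained [OF assms] cauchy_radius_nonneg [OF assms]
    by (auto intro: pow_le_poly_imp_less_sqrt)
qed

lemma cauchy_radius_less_one_plus_max:
  assumes b: "\<forall>k<d. 0 \<le> b k" and d: "d \<ge> 1"
  shows "cauchy_radius d b < 1 + (MAX k\<in>{..<d}. b k)"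
proof -
  have le_max: "\<forall>k<d. b k \<le> (MAX k\<in>{..<d}. b k)" by simp
  have max_nonneg: "0 \<le> (MAX k\<in>{..<d}. b k)"
    using b [rule_format, of 0] le_max [rule_format, of 0] d by linarith
  show ?thesis
    using cauchy_radius_attained [OF b] max_nonneg
      pow_le_poly_imp_less_one_plus_bound [OF cauchy_radius_nonneg [OF b] max_nonneg le_max]
    by auto
qed

lemma cauchy_radius_le_max_sum:
  "\<forall>k<d. 0 \<le> b k \<Longrightarrow> cauchy_radius d b \<le> max 1 (\<Sum>k<d. b k)"
  using cauchy_radius_attained [of d b] cauchy_radius_nonneg [of d b]
  by (auto intro: pow_le_poly_imp_le_max_sum)

lemma cd_spec_rad_le:
  assumes "\<forall>r\<in>cd_carrier m. cd_poly_eval m c d r = cd_zero \<longrightarrow> cd_abs m r \<le> t" and "0 \<le> t"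
  shows "cd_spec_rad m c d \<le> t"
  unfolding cd_spec_rad_def using assms by (intro cSup_least) auto

theorem corollary4p12:
  fixes m n :: nat and a :: "nat \<Rightarrow> nat \<Rightarrow> real"
  assumes "n \<ge> 1"
    and "\<forall>k<n. a k \<in> cd_carrier m"
  shows "(\<forall>r\<in>cd_carrier m. cd_poly_eval m (monic_coeffs n a) n r = cd_zero \<longrightarrow>
            cd_abs m r < R1 m n a \<and> cd_abs m r < R2 m n a \<and> cd_abs m r \<le> R3 m n a)
       \<and> (\<forall>r\<in>cd_carrier m. cd_poly_eval m (deriv_coeffs (monic_coeffs n a)) (n - 1) r = cd_zero \<longrightarrow>
            cd_abs m r < R1 m n a \<and> cd_abs m r < R2 m n a \<and> cd_abs m r \<le> R3 m n a)
       \<and> cd_spec_rad m (monic_coeffs n a) n < R1 m n a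
       \<and> cd_spec_rad m (deriv_coeffs (monic_coeffs n a)) (n - 1) < R1 m n a
       \<and> cd_spec_rad m (monic_coeffs n a) n < R2 m n a
       \<and> cd_spec_rad m (deriv_coeffs (monic_coeffs n a)) (n - 1) < R2 m n a
       \<and> cd_spec_rad m (monic_coeffs n a) n \<le> R3 m n a
       \<and> cd_spec_rad m (deriv_coeffs (monic_coeffs n a)) (n - 1) \<le> R3 m n a"
proof -
  define b where "b = (\<lambda>k. cd_abs m (a k))"
  have b: "\<forall>k<n. 0 \<le> b k"
    using assms(2) by (simp add: b_def cd_abs_nonneg)
  let ?\<rho> = "cauchy_radius n b"
  have f_roots: "\<forall>r\<in>cd_carrier m. cd_poly_eval m (monic_coeffs n a) n r = cd_zero \<longrightarrow> cd_abs m r \<le> ?\<rho>"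
    using monic_root_bound [OF assms(2)] cauchy_radius_upper [OF b]
    by (simp add: b_def cd_abs_nonneg)
  have df_roots: "\<forall>r\<in>cd_carrier m.
      cd_poly_eval m (deriv_coeffs (monic_coeffs n a)) (n - 1) r = cd_zero \<longrightarrow> cd_abs m r \<le> ?\<rho>"
    using deriv_root_bound [OF assms] cauchy_radius_upper [OF b]
    by (simp add: b_def cd_abs_nonneg)
  have spec: "cd_spec_rad m (monic_coeffs n a) n \<le> ?\<rho>"
    "cd_spec_rad m (deriv_coeffs (monic_coeffs n a)) (n - 1) \<le> ?\<rho>"
    using f_roots df_roots cauchy_radius_nonneg [OF b] by (simp_all add: cd_spec_rad_le)
  have "?\<rho> < R1 m n a"
    using cauchy_radius_less_sqrt [OF b] by (simp add: R1_def b_def)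
  moreover have "?\<rho> < R2 m n a"
    using cauchy_radius_less_one_plus_max [OF b assms(1)] by (simp add: R2_def b_def)
  moreover have "?\<rho> \<le> R3 m n a"
    using cauchy_radius_le_max_sum [OF b] by (simp add: R3_def b_def)
  ultimately show ?thesis
    using f_roots df_roots spec by (auto intro: le_less_trans order_trans)
qed

end
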